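(* Let $n\ge1$. Any two sequences $(a_i)_{i=1}^{3n},(b_i)_{i=1}^{3n}$ with entries in $\{1,2\}$ that have the same cyclic length vector are projective equivalent; i.e., every projective equivalence class of such sequences is determined by its cyclic length vector.
   Context: Sequences $(a_i),(b_i)$ of length $3n$ in $\{1,2\}$ are equivalent if $b_i=a_i$ for all $i$, or $b_i=3-a_i$ for all $i$, or $b_i=a_{3n+1-i}$ for all $i$, or $b_i=3-a_{3n+1-i}$ for all $i$. Define $\sigma_{3n}\cdot a=(a_2,\dots,a_{3n},a_1)$ if $n$ is even and $(a_2,\dots,a_{3n},3-a_1)$ if $n$ is odd. $a,b$ are projective equivalent if $b$ is equivalent to $\sigma_{3n}^k\cdot a$ for some $k\in\mathbb{N}$. The length vector of a sequence $a$ is the ordered list of lengths of its maximal blocks of consecutive equal entries (an ordered partition of $3n$). The cyclic length vector of the projective equivalence class of $a$ is the length vector of a projective equivalent sequence $a'$ with $a'_1\ne a'_{3n}$ if $n$ is even, or with $a'_1=a'_{3n}$ if $n$ is odd (and is $(3n)$ if no such $a'$ exists), regarded as an element of $\mathbb{Z}^m/\langle\sigma_m,\tau_m\rangle$, where $m$ is its number of entries, $\sigma_m$ acts by cyclic shift of entries and $\tau_m$ by reversal of the order of entries. The cyclic length vector of a sequence is that of its projective equivalence class. *)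

theory Defs
  imports Main
begin

text \<open>Sequences (a_1,...,a_{3n}) with entries in {1,2} are represented as lists of naturals;
  list index i corresponds to a_{i+1}.\<close>

definition compl_seq :: "nat list \<Rightarrow> nat list" where
  "compl_seq a = map (\<lambda>x. 3 - x) a"

definition seq_equiv :: "nat list \<Rightarrow> nat list \<Rightarrow> bool" where
  "seq_equiv a b \<longleftrightarrow> b = a \<or> b = compl_seq a \<or> b = rev a \<or> b = compl_seq (rev a)"

definition sigma_shift :: "nat \<Rightarrow> nat list \<Rightarrow> nat list" where
  "sigma_shift n a = (if even n then tl a @ [hd a] else tl a @ [3 - hd a])"

definition proj_equiv :: "nat \<Rightarrow> nat list \<Rightarrow> nat list \<Rightarrow> bool" where
  "proj_equiv n a b \<longleftrightarrow> (\<exists>k::nat. seq_equiv ((sigma_shift n ^^ k) a) b)"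

fun length_vector :: "'a list \<Rightarrow> nat list" where
  "length_vector [] = []"
| "length_vector [x] = [1]"
| "length_vector (x # y # xs) =
     (let r = length_vector (y # xs) in
      if x = y then Suc (hd r) # tl r else 1 # r)"

definition dihedral_orbit :: "nat list \<Rightarrow> nat list set" where
  "dihedral_orbit L = {M. \<exists>k. M = rotate k L \<or> M = rev (rotate k L)}"

definition cyc_rep :: "nat \<Rightarrow> nat list \<Rightarrow> nat list \<Rightarrow> bool" where
  "cyc_rep n a a' \<longleftrightarrow> proj_equiv n a a' \<and>
     (if even n then hd a' \<noteq> last a' else hd a' = last a')"

text \<open>The cyclic length vector, as an element of the quotient by the dihedral action,
  i.e. as a dihedral orbit of length vectors.\<close>
definition cyclic_length_vector :: "nat \<Rightarrow> nat list \<Rightarrow> nat list set" where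
  "cyclic_length_vector n a =
     (if \<exists>a'. cyc_rep n a a'
      then \<Union>{dihedral_orbit (length_vector a') | a'. cyc_rep n a a'}
      else dihedral_orbit [3 * n])"

end

theory Submission
  imports Defs
begin

text \<open>A sequence over {1,2} is determined by its first entry and its length vector, so two
  sequences with the same length vector are equal or complementary. The shift has period 2N
  (N the length) and reversal conjugates it to its inverse, so projective equivalence is an
  equivalence relation. The conditions on the first and last entry of a representative say
  that its number of blocks has the parity of n; for such a sequence, shifting by the length m
  of its first block moves that block to the end without merging it with the last block, so
  the length vector is rotated, and reversal reverses it. Hence every element of the dihedral
  orbit of the length vector of a representative is the length vector of another one, and two
  sequences with the same cyclic length vector have representatives with equal length vectors.
  Representatives fail to exist only for constant sequences with n even, and then the cyclic
  length vector is (3n), which no representative attains.\<close>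

definition binary_seq :: "nat list \<Rightarrow> bool" where
  "binary_seq x \<longleftrightarrow> x \<noteq> [] \<and> set x \<subseteq> {1, 2}"

lemma binary_seq_hd: "binary_seq x \<Longrightarrow> hd x \<in> {1, 2}"
  unfolding binary_seq_def using hd_in_set by blast

fun seq_of_blocks :: "nat \<Rightarrow> nat list \<Rightarrow> nat list" where
  "seq_of_blocks v [] = []"
| "seq_of_blocks v (m # L) = replicate m v @ seq_of_blocks (3 - v) L"

lemma length_vector_eq_Nil_iff [simp]: "length_vector x = [] \<longleftrightarrow> x = []"
  by (induction x rule: length_vector.induct) (auto simp: Let_def)

lemma zero_notin_length_vector: "0 \<notin> set (length_vector x)"
proof (induction x rule: length_vector.induct)
  case (3 x y xs)
  then show ?case by (cases "length_vector (y # xs)") (auto simp: Let_def)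
qed auto

lemma sum_list_length_vector: "sum_list (length_vector x) = length x"
proof (induction x rule: length_vector.induct)
  case (3 x y xs)
  then show ?case by (cases "length_vector (y # xs)") (auto simp: Let_def)
qed auto

lemma seq_of_blocks_length_vector:
  assumes "x \<noteq> []" and "set x \<subseteq> {1, 2}"
  shows "seq_of_blocks (hd x) (length_vector x) = x"
  using assms
proof (induction x rule: length_vector.induct)
  case (3 x y xs)
  then have IH: "seq_of_blocks y (length_vector (y # xs)) = y # xs" by simp
  show ?case
  proof (cases "x = y")
    case True
    with IH show ?thesis by (cases "length_vector (y # xs)") (auto simp: Let_def)
  next
    case False
    with "3.prems" have "y = 3 - x" by auto
    with False IH show ?thesis by (simp add: Let_def)
  qed
qed auto

lemma hd_seq_of_blocks: "L \<noteq> [] \<Longrightarrow> 0 \<notin> set L \<Longrightarrow> hd (seq_of_blocks v L) = v"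
  by (cases L) (auto simp: hd_append)

lemma seq_of_blocks_eq_Nil_iff: "0 \<notin> set L \<Longrightarrow> seq_of_blocks v L = [] \<longleftrightarrow> L = []"
  by (cases L) auto

lemma length_vector_replicate_append:
  "y = [] \<or> hd y \<noteq> v \<Longrightarrow> length_vector (replicate (Suc j) v @ y) = Suc j # length_vector y"
  by (induction j) (cases y, auto)

lemma length_vector_seq_of_blocks: "0 \<notin> set L \<Longrightarrow> length_vector (seq_of_blocks v L) = L"
proof (induction L arbitrary: v)
  case (Cons m L)
  then obtain j where m: "m = Suc j" by (cases m) auto
  have "seq_of_blocks (3 - v) L = [] \<or> hd (seq_of_blocks (3 - v) L) \<noteq> v"
    using Cons.prems hd_seq_of_blocks[of L "3 - v"] by (cases "L = []") (auto, arith)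
  then have "length_vector (replicate (Suc j) v @ seq_of_blocks (3 - v) L)
      = Suc j # length_vector (seq_of_blocks (3 - v) L)"
    by (rule length_vector_replicate_append)
  with m Cons show ?case by (simp del: replicate.simps)
qed simp

lemma seq_of_blocks_append:
  "v \<le> 3 \<Longrightarrow> seq_of_blocks v (K @ M) =
     seq_of_blocks v K @ seq_of_blocks (if even (length K) then v else 3 - v) M"
  by (induction K arbitrary: v) auto

lemma compl_seq_seq_of_blocks: "v \<le> 3 \<Longrightarrow> compl_seq (seq_of_blocks v L) = seq_of_blocks (3 - v) L"
  by (induction L arbitrary: v) (auto simp: compl_seq_def)

lemma rev_seq_of_blocks:
  "v \<le> 3 \<Longrightarrow> rev (seq_of_blocks v L) = seq_of_blocks (if odd (length L) then v else 3 - v) (rev L)"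
  by (induction L arbitrary: v) (auto simp: seq_of_blocks_append)

lemma last_seq_of_blocks:
  assumes "L \<noteq> []" and "0 \<notin> set L" and "v \<le> 3"
  shows "last (seq_of_blocks v L) = (if odd (length L) then v else 3 - v)"
proof -
  have "last (seq_of_blocks v L) = hd (rev (seq_of_blocks v L))"
    using assms by (simp add: hd_rev seq_of_blocks_eq_Nil_iff)
  also have "\<dots> = (if odd (length L) then v else 3 - v)"
    using assms by (simp add: rev_seq_of_blocks hd_seq_of_blocks)
  finally show ?thesis .
qed

lemma hd_eq_last_iff_odd_blocks:
  assumes "binary_seq x"
  shows "hd x = last x \<longleftrightarrow> odd (length (length_vector x))"
proof -
  have v: "hd x \<in> {1, 2}"
    using assms by (rule binary_seq_hd)
  have "last x = last (seq_of_blocks (hd x) (length_vector x))"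
    using assms seq_of_blocks_length_vector by (simp add: binary_seq_def)
  also have "\<dots> = (if odd (length (length_vector x)) then hd x else 3 - hd x)"
    using assms v by (intro last_seq_of_blocks) (auto simp: zero_notin_length_vector binary_seq_def)
  finally show ?thesis
    using v by auto
qed

lemma length_vector_rev:
  assumes "binary_seq x"
  shows "length_vector (rev x) = rev (length_vector x)"
proof -
  have "hd x \<le> 3"
    using binary_seq_hd[OF assms] by auto
  have "rev x = rev (seq_of_blocks (hd x) (length_vector x))"
    using assms seq_of_blocks_length_vector by (simp add: binary_seq_def)
  also have "\<dots> = seq_of_blocks (if odd (length (length_vector x)) then hd x else 3 - hd x)
      (rev (length_vector x))"
    using \<open>hd x \<le> 3\<close> by (rule rev_seq_of_blocks)
  finally show ?thesis
    by (simp add: length_vector_seq_of_blocks zero_notin_length_vector)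
qed

lemma seq_equiv_if_length_vector_eq:
  assumes "binary_seq x" and "binary_seq y" and "length_vector x = length_vector y"
  shows "seq_equiv x y"
proof -
  have x: "seq_of_blocks (hd x) (length_vector x) = x"
    using assms(1) seq_of_blocks_length_vector by (simp add: binary_seq_def)
  have y: "seq_of_blocks (hd y) (length_vector x) = y"
    using assms(2,3) seq_of_blocks_length_vector by (simp add: binary_seq_def)
  have "hd x \<in> {1, 2}" and "hd y \<in> {1, 2}"
    using assms(1,2) by (auto dest: binary_seq_hd)
  then consider "hd y = hd x" | "hd y = 3 - hd x"
    by auto
  then show ?thesis
  proof cases
    case 1
    then show ?thesis
      using x y by (simp add: seq_equiv_def)
  next
    case 2
    then have "y = compl_seq x"
      using x y compl_seq_seq_of_blocks[of "hd x" "length_vector x"] \<open>hd x \<in> {1, 2}\<close> by auto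
    then show ?thesis
      by (simp add: seq_equiv_def)
  qed
qed

definition wrap_entry :: "nat \<Rightarrow> nat \<Rightarrow> nat" where
  "wrap_entry n c = (if even n then c else 3 - c)"

lemma sigma_shift_Cons [simp]: "sigma_shift n (c # x) = x @ [wrap_entry n c]"
  by (simp add: sigma_shift_def wrap_entry_def)

lemma sigma_shift_funpow_append: "(sigma_shift n ^^ length x) (x @ y) = y @ map (wrap_entry n) x"
  by (induction x arbitrary: y) (simp_all add: funpow_Suc_right del: funpow.simps)

lemma binary_seq_sigma_shift_funpow:
  "binary_seq x \<Longrightarrow> binary_seq ((sigma_shift n ^^ k) x) \<and> length ((sigma_shift n ^^ k) x) = length x"
proof (induction k)
  case (Suc k)
  then show ?case
    by (cases "(sigma_shift n ^^ k) x") (auto simp: binary_seq_def wrap_entry_def)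
qed simp

lemma sigma_shift_funpow_period:
  assumes "set x \<subseteq> {1, 2}"
  shows "(sigma_shift n ^^ (2 * length x)) x = x"
proof -
  have "(sigma_shift n ^^ length x) x = map (wrap_entry n) x"
    using sigma_shift_funpow_append[where x = x and y = "[]"] by simp
  then have "(sigma_shift n ^^ (length x + length x)) x
      = (sigma_shift n ^^ length x) (map (wrap_entry n) x)"
    by (simp add: funpow_add)
  also have "\<dots> = map (wrap_entry n) (map (wrap_entry n) x)"
    using sigma_shift_funpow_append[where x = "map (wrap_entry n) x" and y = "[]"] by simp
  also have "\<dots> = x"
    using assms by (induction x) (auto simp: wrap_entry_def)
  finally show ?thesis
    by (simp add: mult_2)
qed

lemma sigma_shift_compl_seq: "x \<noteq> [] \<Longrightarrow> sigma_shift n (compl_seq x) = compl_seq (sigma_shift n x)"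
  by (cases x) (auto simp: compl_seq_def wrap_entry_def)

lemma sigma_shift_rev:
  assumes "binary_seq x"
  shows "sigma_shift n (rev x) = rev ((sigma_shift n ^^ (2 * length x - 1)) x)"
proof -
  define y where "y = (sigma_shift n ^^ (2 * length x - 1)) x"
  have "Suc (2 * length x - 1) = 2 * length x"
    using assms by (simp add: binary_seq_def)
  then have "sigma_shift n y = (sigma_shift n ^^ (2 * length x)) x"
    by (metis y_def funpow.simps(2) o_apply)
  also have "\<dots> = x"
    using assms by (simp add: sigma_shift_funpow_period binary_seq_def)
  finally have x: "x = sigma_shift n y" ..
  have "binary_seq y"
    using binary_seq_sigma_shift_funpow[OF assms] by (simp add: y_def)
  then obtain c z where "y = c # z" and "c \<in> {1, 2}"
    by (cases y) (auto simp: binary_seq_def)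
  then have "sigma_shift n (rev (sigma_shift n y)) = rev y"
    by (auto simp: wrap_entry_def)
  from this[folded x] show ?thesis
    by (simp add: y_def)
qed

lemma compl_seq_compl_seq: "set x \<subseteq> {1, 2} \<Longrightarrow> compl_seq (compl_seq x) = x"
  by (induction x) (auto simp: compl_seq_def)

lemma rev_compl_seq: "rev (compl_seq x) = compl_seq (rev x)"
  by (simp add: compl_seq_def rev_map)

lemma seq_equiv_sym: "set x \<subseteq> {1, 2} \<Longrightarrow> seq_equiv x y \<Longrightarrow> seq_equiv y x"
  using compl_seq_compl_seq[of x] compl_seq_compl_seq[of "rev x"]
  by (auto simp: seq_equiv_def rev_compl_seq)

lemma seq_equiv_trans:
  "set x \<subseteq> {1, 2} \<Longrightarrow> seq_equiv x y \<Longrightarrow> seq_equiv y z \<Longrightarrow> seq_equiv x z"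
  using compl_seq_compl_seq[of x] compl_seq_compl_seq[of "rev x"]
  by (auto simp: seq_equiv_def rev_compl_seq)

lemma binary_seq_seq_equiv:
  "binary_seq x \<Longrightarrow> seq_equiv x y \<Longrightarrow> binary_seq y \<and> length y = length x"
  by (fastforce simp: seq_equiv_def binary_seq_def compl_seq_def)

lemma seq_equiv_sigma_shift:
  assumes "binary_seq x" and "seq_equiv x y"
  shows "\<exists>j. seq_equiv ((sigma_shift n ^^ j) x) (sigma_shift n y)"
proof -
  let ?x' = "(sigma_shift n ^^ (2 * length x - 1)) x"
  have "x \<noteq> []" and "rev x \<noteq> []"
    using assms(1) by (auto simp: binary_seq_def)
  then consider "sigma_shift n y = sigma_shift n x"
    | "sigma_shift n y = compl_seq (sigma_shift n x)"
    | "sigma_shift n y = rev ?x'"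
    | "sigma_shift n y = compl_seq (rev ?x')"
    using assms sigma_shift_rev[of x n]
    by (auto simp: seq_equiv_def sigma_shift_compl_seq)
  then show ?thesis
    by cases (force simp: seq_equiv_def intro: exI[of _ 1] exI[of _ "2 * length x - 1"])+
qed

lemma seq_equiv_imp_proj_equiv: "seq_equiv x y \<Longrightarrow> proj_equiv n x y"
  unfolding proj_equiv_def by (metis funpow_0)

lemma binary_seq_proj_equiv:
  "binary_seq x \<Longrightarrow> proj_equiv n x y \<Longrightarrow> binary_seq y \<and> length y = length x"
  unfolding proj_equiv_def using binary_seq_sigma_shift_funpow binary_seq_seq_equiv by metis

lemma proj_equiv_sigma_shift:
  assumes "binary_seq x" and "proj_equiv n x y"
  shows "proj_equiv n x (sigma_shift n y)"
proof -
  obtain k where "seq_equiv ((sigma_shift n ^^ k) x) y"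
    using assms(2) by (auto simp: proj_equiv_def)
  moreover have "binary_seq ((sigma_shift n ^^ k) x)"
    using assms(1) binary_seq_sigma_shift_funpow by blast
  ultimately obtain j where "seq_equiv ((sigma_shift n ^^ j) ((sigma_shift n ^^ k) x)) (sigma_shift n y)"
    using seq_equiv_sigma_shift by blast
  then show ?thesis
    unfolding proj_equiv_def by (metis comp_apply funpow_add)
qed

lemma proj_equiv_sigma_shift_funpow:
  "binary_seq x \<Longrightarrow> proj_equiv n x y \<Longrightarrow> proj_equiv n x ((sigma_shift n ^^ j) y)"
  by (induction j) (simp_all add: proj_equiv_sigma_shift)

lemma proj_equiv_seq_equiv:
  assumes "binary_seq x" and "proj_equiv n x y" and "seq_equiv y z"
  shows "proj_equiv n x z"
proof -
  obtain k where "seq_equiv ((sigma_shift n ^^ k) x) y"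
    using assms(2) by (auto simp: proj_equiv_def)
  moreover have "binary_seq ((sigma_shift n ^^ k) x)"
    using assms(1) binary_seq_sigma_shift_funpow by blast
  ultimately show ?thesis
    using assms(3) seq_equiv_trans unfolding proj_equiv_def binary_seq_def by blast
qed

lemma proj_equiv_trans:
  assumes "binary_seq x" and "proj_equiv n x y" and "proj_equiv n y z"
  shows "proj_equiv n x z"
proof -
  obtain j where "seq_equiv ((sigma_shift n ^^ j) y) z"
    using assms(3) by (auto simp: proj_equiv_def)
  moreover have "proj_equiv n x ((sigma_shift n ^^ j) y)"
    using assms(1,2) by (rule proj_equiv_sigma_shift_funpow)
  ultimately show ?thesis
    using assms(1) proj_equiv_seq_equiv by blast
qed

lemma proj_equiv_sym:
  assumes "binary_seq x" and "proj_equiv n x y"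
  shows "proj_equiv n y x"
proof -
  obtain k where k: "seq_equiv ((sigma_shift n ^^ k) x) y"
    using assms(2) by (auto simp: proj_equiv_def)
  define N where "N = length x"
  have "binary_seq ((sigma_shift n ^^ k) x)" and "length ((sigma_shift n ^^ k) x) = N"
    using assms(1) binary_seq_sigma_shift_funpow unfolding N_def by blast+
  then have "seq_equiv y ((sigma_shift n ^^ k) x)"
    using k seq_equiv_sym unfolding binary_seq_def by blast
  then have "proj_equiv n y ((sigma_shift n ^^ ((2 * N - 1) * k)) ((sigma_shift n ^^ k) x))"
    using assms binary_seq_proj_equiv proj_equiv_sigma_shift_funpow seq_equiv_imp_proj_equiv
    by metis
  also have "(sigma_shift n ^^ ((2 * N - 1) * k)) ((sigma_shift n ^^ k) x)
      = (sigma_shift n ^^ (2 * N * k)) x"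
  proof -
    have "(2 * N - 1) * k + k = 2 * N * k"
      using assms(1) by (cases N) (auto simp: N_def binary_seq_def)
    then show ?thesis
      by (metis comp_apply funpow_add)
  qed
  also have "\<dots> = x"
    using funpow_mod_eq[where f = "sigma_shift n" and n = "2 * N" and x = x and m = "2 * N * k"]
      sigma_shift_funpow_period[of x n] assms(1)
    by (simp add: N_def binary_seq_def)
  finally show ?thesis .
qed

lemma cyc_rep_iff:
  assumes "binary_seq x"
  shows "cyc_rep n x y \<longleftrightarrow> proj_equiv n x y \<and> (even n \<longleftrightarrow> even (length (length_vector y)))"
  using hd_eq_last_iff_odd_blocks binary_seq_proj_equiv[OF assms] unfolding cyc_rep_def by auto

lemma binary_seq_cyc_rep: "binary_seq x \<Longrightarrow> cyc_rep n x y \<Longrightarrow> binary_seq y"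
  unfolding cyc_rep_def using binary_seq_proj_equiv by blast

lemma sigma_shift_funpow_seq_of_blocks:
  assumes "v \<le> 3" and "even n \<longleftrightarrow> odd (length M)"
  shows "(sigma_shift n ^^ m) (seq_of_blocks v (m # M)) = seq_of_blocks (3 - v) (M @ [m])"
proof -
  have "(sigma_shift n ^^ m) (seq_of_blocks v (m # M))
      = seq_of_blocks (3 - v) M @ map (wrap_entry n) (replicate m v)"
    using sigma_shift_funpow_append[where x = "replicate m v" and y = "seq_of_blocks (3 - v) M"]
    by simp
  also have "\<dots> = seq_of_blocks (3 - v) (M @ [m])"
    using assms by (simp add: seq_of_blocks_append wrap_entry_def)
  finally show ?thesis .
qed

lemma cyc_rep_rotate1:
  assumes "binary_seq x" and "cyc_rep n x y"
  obtains y' where "cyc_rep n x y'" and "length_vector y' = rotate1 (length_vector y)"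
proof -
  have "binary_seq y" and "proj_equiv n x y"
    and parity: "even n \<longleftrightarrow> even (length (length_vector y))"
    using assms binary_seq_cyc_rep cyc_rep_iff by blast+
  then obtain m M where mM: "length_vector y = m # M"
    by (cases "length_vector y") (auto simp: binary_seq_def)
  have "seq_of_blocks (hd y) (m # M) = y"
    using \<open>binary_seq y\<close> seq_of_blocks_length_vector[of y] mM by (auto simp: binary_seq_def)
  moreover have "hd y \<le> 3"
    using binary_seq_hd[OF \<open>binary_seq y\<close>] by auto
  ultimately have "(sigma_shift n ^^ m) y = seq_of_blocks (3 - hd y) (M @ [m])"
    using sigma_shift_funpow_seq_of_blocks[of "hd y" n M m] parity mM by simp
  then have "length_vector ((sigma_shift n ^^ m) y) = M @ [m]"
    using length_vector_seq_of_blocks zero_notin_length_vector[of y] mM by simp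
  moreover have "proj_equiv n x ((sigma_shift n ^^ m) y)"
    using assms(1) \<open>proj_equiv n x y\<close> by (rule proj_equiv_sigma_shift_funpow)
  ultimately show ?thesis
    using that parity mM cyc_rep_iff[OF assms(1)] by simp
qed

lemma cyc_rep_rotate:
  assumes "binary_seq x" and "cyc_rep n x y"
  shows "\<exists>y'. cyc_rep n x y' \<and> length_vector y' = rotate k (length_vector y)"
proof (induction k)
  case 0
  then show ?case
    using assms(2) by auto
next
  case (Suc k)
  then obtain y' where "cyc_rep n x y'" and "length_vector y' = rotate k (length_vector y)"
    by blast
  then show ?case
    using cyc_rep_rotate1[OF assms(1)] by (metis rotate_Suc)
qed

lemma cyc_rep_rev:
  assumes "binary_seq x" and "cyc_rep n x y"
  shows "cyc_rep n x (rev y)"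
proof -
  have "binary_seq y" and "proj_equiv n x y"
    using assms binary_seq_cyc_rep cyc_rep_iff by blast+
  then have "proj_equiv n x (rev y)"
    using assms(1) proj_equiv_seq_equiv by (auto simp: seq_equiv_def)
  then show ?thesis
    using assms cyc_rep_iff length_vector_rev[OF \<open>binary_seq y\<close>] by simp
qed

lemma cyc_rep_dihedral_orbit:
  assumes "binary_seq x" and "cyc_rep n x y" and "L \<in> dihedral_orbit (length_vector y)"
  shows "\<exists>y'. cyc_rep n x y' \<and> length_vector y' = L"
proof -
  obtain k where k: "L = rotate k (length_vector y) \<or> L = rev (rotate k (length_vector y))"
    using assms(3) by (auto simp: dihedral_orbit_def)
  obtain y' where "cyc_rep n x y'" and "length_vector y' = rotate k (length_vector y)"
    using cyc_rep_rotate[OF assms(1,2)] by blast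
  moreover have "length_vector (rev y') = rev (length_vector y')"
    using assms(1) \<open>cyc_rep n x y'\<close> binary_seq_cyc_rep length_vector_rev by blast
  ultimately show ?thesis
    using k cyc_rep_rev[OF assms(1)] by metis
qed

lemma cyc_rep_exists:
  assumes "binary_seq x" and "odd n \<or> length_vector x \<noteq> [length x]"
  shows "\<exists>y. cyc_rep n x y"
proof -
  obtain m M where mM: "length_vector x = m # M"
    using assms(1) by (cases "length_vector x") (auto simp: binary_seq_def)
  show ?thesis
  proof (cases "M = []")
    case True
    then have "odd n"
      using assms(2) mM sum_list_length_vector[of x] by auto
    then have "cyc_rep n x x"
      using cyc_rep_iff[OF assms(1)] mM True seq_equiv_imp_proj_equiv by (simp add: seq_equiv_def)
    then show ?thesis ..
  next
    case False
    define v where "v = hd x"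
    have "v \<in> {1, 2}"
      using assms(1) binary_seq_hd v_def by blast
    have "0 < m" and "0 \<notin> set M"
      using zero_notin_length_vector[of x] mM by auto
    have "x = replicate m v @ seq_of_blocks (3 - v) M"
      using assms(1) seq_of_blocks_length_vector[of x] mM by (auto simp: binary_seq_def v_def)
    then have "(sigma_shift n ^^ m) x = seq_of_blocks (3 - v) M @ replicate m (wrap_entry n v)"
      using sigma_shift_funpow_append[where x = "replicate m v"] by (metis length_replicate map_replicate)
    \<comment> \<open>moving the first block to the end makes the first and last entries \<open>3 - v\<close> and
      \<open>wrap_entry n v\<close>, which meet the condition on representatives for either parity of \<open>n\<close>\<close>
    then have "hd ((sigma_shift n ^^ m) x) = 3 - v" and "last ((sigma_shift n ^^ m) x) = wrap_entry n v"
      using False \<open>0 < m\<close> \<open>0 \<notin> set M\<close> by (auto simp: hd_seq_of_blocks seq_of_blocks_eq_Nil_iff)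
    moreover have "proj_equiv n x ((sigma_shift n ^^ m) x)"
      using assms(1) seq_equiv_imp_proj_equiv proj_equiv_sigma_shift_funpow
      by (metis seq_equiv_def)
    ultimately have "cyc_rep n x ((sigma_shift n ^^ m) x)"
      using \<open>v \<in> {1, 2}\<close> by (auto simp: cyc_rep_def wrap_entry_def)
    then show ?thesis ..
  qed
qed

lemma self_in_dihedral_orbit: "L \<in> dihedral_orbit L"
  unfolding dihedral_orbit_def by (intro CollectI exI[of _ 0]) simp

lemma cyclic_length_vector_cyc_rep:
  assumes "binary_seq x" and "cyc_rep n x y"
  shows "cyclic_length_vector n x = length_vector ` {y. cyc_rep n x y}"
proof -
  have "\<exists>y. cyc_rep n x y"
    using assms(2) by blast
  then have "cyclic_length_vector n x = \<Union>{dihedral_orbit (length_vector y) | y. cyc_rep n x y}"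
    unfolding cyclic_length_vector_def by (simp only: if_True)
  also have "\<dots> = length_vector ` {y. cyc_rep n x y}"
  proof
    show "\<Union>{dihedral_orbit (length_vector y) | y. cyc_rep n x y} \<subseteq> length_vector ` {y. cyc_rep n x y}"
      using cyc_rep_dihedral_orbit[OF assms(1)] by blast
    show "length_vector ` {y. cyc_rep n x y} \<subseteq> \<Union>{dihedral_orbit (length_vector y) | y. cyc_rep n x y}"
      using self_in_dihedral_orbit by blast
  qed
  finally show ?thesis .
qed

lemma cyclic_length_vector_no_cyc_rep:
  "\<nexists>y. cyc_rep n x y \<Longrightarrow> cyclic_length_vector n x = {[3 * n]}"
  by (auto simp: cyclic_length_vector_def dihedral_orbit_def)

lemma cyc_rep_exists_if_cyclic_length_vector_eq:
  assumes "binary_seq x" and "binary_seq x'" and "cyc_rep n x y"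
    and "cyclic_length_vector n x = cyclic_length_vector n x'"
  shows "\<exists>y'. cyc_rep n x' y'"
proof (rule ccontr)
  assume none: "\<nexists>y'. cyc_rep n x' y'"
  then have "even n"
    using assms(2) cyc_rep_exists by blast
  have "length_vector y \<in> cyclic_length_vector n x"
    using cyclic_length_vector_cyc_rep[OF assms(1,3)] assms(3) by blast
  then have "length_vector y = [3 * n]"
    using assms(4) cyclic_length_vector_no_cyc_rep[OF none] by simp
  then have "odd n"
    using cyc_rep_iff[OF assms(1)] assms(3) by simp
  with \<open>even n\<close> show False
    by simp
qed

lemma proj_equiv_if_cyc_reps_length_vector_eq:
  assumes "binary_seq x" and "binary_seq x'" and "cyc_rep n x y" and "cyc_rep n x' y'"
    and "length_vector y = length_vector y'"
  shows "proj_equiv n x x'"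
proof -
  have "seq_equiv y y'"
    using assms binary_seq_cyc_rep seq_equiv_if_length_vector_eq by metis
  then have "proj_equiv n x y'"
    using assms(1,3) proj_equiv_seq_equiv by (auto simp: cyc_rep_def)
  moreover have "proj_equiv n y' x'"
    using assms(2,4) proj_equiv_sym by (auto simp: cyc_rep_def)
  ultimately show ?thesis
    using assms(1) proj_equiv_trans by blast
qed

theorem mainTheorem4:
  fixes n :: nat and a b :: "nat list"
  assumes "n \<ge> 1"
    and "length a = 3 * n" and "set a \<subseteq> {1, 2}"
    and "length b = 3 * n" and "set b \<subseteq> {1, 2}"
    and "cyclic_length_vector n a = cyclic_length_vector n b"
  shows "proj_equiv n a b"
proof -
  have a: "binary_seq a" and b: "binary_seq b"
    using assms by (auto simp: binary_seq_def)
  show ?thesis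
  proof (cases "\<exists>c. cyc_rep n a c")
    case True
    then obtain c where c: "cyc_rep n a c"
      by blast
    then obtain d0 where "cyc_rep n b d0"
      using cyc_rep_exists_if_cyclic_length_vector_eq[OF a b _ assms(6)] by blast
    then have "length_vector c \<in> length_vector ` {d. cyc_rep n b d}"
      using c assms(6) cyclic_length_vector_cyc_rep[OF a c] cyclic_length_vector_cyc_rep[OF b]
      by blast
    then obtain d where "cyc_rep n b d" and "length_vector c = length_vector d"
      by auto
    then show ?thesis
      using a b c proj_equiv_if_cyc_reps_length_vector_eq by blast
  next
    case False
    then have "\<nexists>d. cyc_rep n b d"
      using cyc_rep_exists_if_cyclic_length_vector_eq[OF b a _ assms(6)[symmetric]] by blast
    then have "length_vector a = length_vector b"
      using False a b assms(2,4) cyc_rep_exists by metis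
    then show ?thesis
      using a b seq_equiv_if_length_vector_eq seq_equiv_imp_proj_equiv by blast
  qed
qed

end
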